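(* For every $k\in\mathbb{N}^*$ and $r>0$, if $k$ convex sets $S_1,\dots,S_k\subseteq\mathbb{R}^d$ cover a ball in $\mathbb{R}^d$ of radius $r$, then there exists $i$ such that $S_i$ contains a ball of radius $\frac{r}{k d^d}$. *)

theory Defs
  imports "HOL-Analysis.Analysis"
begin

end

theory Submission
  imports Defs
begin

text \<open>Take an \<open>N \<times> \<dots> \<times> N\<close> grid in a cube inside the ball and colour each grid point by a
set containing it. A colour class that has no two points at distance \<open>\<ge> M\<close> steps on some
axis-parallel line has at most \<open>N^(d-1) M\<close> points, so if \<open>k M < N\<close> one set \<open>S\<^sub>i\<close> contains, in every
axis direction, a segment of a common length \<open>L\<close>. Averaging points on these \<open>d\<close> segments shows
that the convex set \<open>S\<^sub>i\<close> contains a ball of radius \<open>L / (2d)\<close>. Tuning the cube and the grid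
gives balls of every radius below \<open>r / (k d^2) \<ge> r / (k d^d)\<close>, and the limiting radius is
attained by compactness, since the inradius \<open>x \<mapsto> infdist x (- S\<^sub>i)\<close> is continuous.\<close>

lemma card_le_if_pairwise_lt_add:
  fixes T :: "nat set"
  assumes "finite T" and "\<And>x y. x \<in> T \<Longrightarrow> y \<in> T \<Longrightarrow> y < x + M"
  shows "card T \<le> M"
proof (cases "T = {}")
  case False
  then have "Min T \<in> T"
    using assms(1) by simp
  then have "T \<subseteq> {Min T..<Min T + M}"
    using assms by auto
  then show ?thesis
    using card_mono[of "{Min T..<Min T + M}" T] by simp
qed simp

lemma card_PiE_subset_thin_in_direction:
  assumes fin: "finite B" and b: "b \<in> B" and A: "A \<subseteq> PiE B (\<lambda>_. {..<N})"
    and thin: "\<And>g g'. g \<in> A \<Longrightarrow> g' \<in> A \<Longrightarrow> (\<forall>b'\<in>B - {b}. g b' = g' b') \<Longrightarrow> g' b < g b + M"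
  shows "card A \<le> N ^ (card B - 1) * M"
proof -
  define F where "F = PiE (B - {b}) (\<lambda>_. {..<N::nat})"
  define fibre where "fibre f = (\<lambda>g. g b) ` {g\<in>A. \<forall>b'\<in>B - {b}. g b' = f b'}" for f
  define decompose where "decompose g = (restrict g (B - {b}), g b)" for g :: "'a \<Rightarrow> nat"
  have "(\<lambda>g. g b) ` A \<subseteq> {..<N}"
    using A b PiE_mem by blast
  then have fibre_finite: "finite (fibre f)" for f
    by (intro finite_subset[OF _ finite_lessThan[of N]]) (auto simp: fibre_def)
  have fibre_small: "card (fibre f) \<le> M" for f
  proof (rule card_le_if_pairwise_lt_add[OF fibre_finite])
    fix x y assume "x \<in> fibre f" "y \<in> fibre f"
    obtain g where "g \<in> A" "\<forall>b'\<in>B - {b}. g b' = f b'" "x = g b"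
      using \<open>x \<in> fibre f\<close> unfolding fibre_def by blast
    moreover obtain g' where "g' \<in> A" "\<forall>b'\<in>B - {b}. g' b' = f b'" "y = g' b"
      using \<open>y \<in> fibre f\<close> unfolding fibre_def by blast
    ultimately show "y < x + M"
      using thin by simp
  qed
  have "inj_on decompose A"
  proof (rule inj_onI)
    fix g g' assume "g \<in> A" "g' \<in> A" "decompose g = decompose g'"
    then show "g = g'"
      using A by (intro PiE_ext[of g B _ g']) (auto simp: decompose_def fun_eq_iff split: if_splits)
  qed
  then have "card A = card (decompose ` A)"
    by (simp add: card_image)
  also have "\<dots> \<le> card (Sigma F fibre)"
  proof (rule card_mono)
    show "finite (Sigma F fibre)"
      using fin fibre_finite by (simp add: F_def finite_PiE)
    show "decompose ` A \<subseteq> Sigma F fibre"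
    proof
      fix p assume "p \<in> decompose ` A"
      then obtain g where g: "g \<in> A" "p = decompose g"
        by blast
      then have "restrict g (B - {b}) \<in> F"
        using A b by (auto simp: F_def restrict_PiE_iff PiE_mem)
      moreover have "g b \<in> fibre (restrict g (B - {b}))"
        using g(1) unfolding fibre_def by force
      ultimately show "p \<in> Sigma F fibre"
        by (simp add: g(2) decompose_def)
    qed
  qed
  also have "\<dots> = (\<Sum>f\<in>F. card (fibre f))"
    using fin fibre_finite by (simp add: F_def finite_PiE)
  also have "\<dots> \<le> card F * M"
    using sum_mono[of F "\<lambda>f. card (fibre f)" "\<lambda>_. M"] fibre_small by simp
  also have "card F = N ^ (card B - 1)"
    using fin b by (simp add: F_def card_PiE card_Diff_singleton)
  finally show ?thesis .
qed

lemma PiE_cover_has_long_lines: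
  fixes N M k :: nat
  assumes fin: "finite B" and ne: "B \<noteq> {}"
    and cov: "PiE B (\<lambda>_. {..<N}) \<subseteq> (\<Union>i<k. A i)" and kM: "k * M < N"
  shows "\<exists>i<k. \<forall>b\<in>B. \<exists>g\<in>A i \<inter> PiE B (\<lambda>_. {..<N}). \<exists>g'\<in>A i \<inter> PiE B (\<lambda>_. {..<N}).
            (\<forall>b'\<in>B - {b}. g b' = g' b') \<and> g b + M \<le> g' b"
proof (rule ccontr)
  define G where "G = PiE B (\<lambda>_. {..<N})"
  assume no_long_lines: "\<not> ?thesis"
  have thin: "card (A i \<inter> G) \<le> N ^ (card B - 1) * M" if "i < k" for i
  proof -
    obtain b where "b \<in> B" and
      "\<forall>g\<in>A i \<inter> G. \<forall>g'\<in>A i \<inter> G. (\<forall>b'\<in>B - {b}. g b' = g' b') \<longrightarrow> g' b < g b + M"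
      using no_long_lines \<open>i < k\<close> unfolding G_def by (meson not_le)
    then show ?thesis
      using fin by (intro card_PiE_subset_thin_in_direction[of B b]) (simp_all add: G_def)
  qed
  obtain n where n: "card B = Suc n"
    using fin ne by (metis card_gt_0_iff gr0_conv_Suc)
  have "N ^ card B = card G"
    using fin by (simp add: G_def card_PiE)
  also have "\<dots> \<le> card (\<Union>i<k. A i \<inter> G)"
    using cov fin by (intro card_mono) (auto simp: G_def finite_PiE)
  also have "\<dots> \<le> (\<Sum>i<k. card (A i \<inter> G))"
    by (rule card_UN_le) simp
  also have "\<dots> \<le> k * (N ^ (card B - 1) * M)"
    using sum_mono[of "{..<k}", OF thin] by simp
  finally have "N * N ^ n \<le> (k * M) * N ^ n"
    by (simp add: n ac_simps)
  then show False
    using kM by (simp add: mult_le_cancel2)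
qed

lemma convex_mem_shorter_step:
  fixes C :: "'a::real_vector set"
  assumes "convex C" and "u \<in> C" and "u + t *\<^sub>R v \<in> C" and "0 \<le> s" and "s \<le> t"
  shows "u + s *\<^sub>R v \<in> C"
proof (cases "t = 0")
  case False
  then have "0 < t"
    using assms by simp
  then have "(1 - s / t) *\<^sub>R u + (s / t) *\<^sub>R (u + t *\<^sub>R v) \<in> C"
    using assms by (intro convexD) (auto simp: field_simps)
  also have "(1 - s / t) *\<^sub>R u + (s / t) *\<^sub>R (u + t *\<^sub>R v) = u + s *\<^sub>R v"
    using \<open>0 < t\<close> by (simp add: algebra_simps)
  finally show ?thesis .
qed (use assms in simp)

lemma convex_contains_ball_from_axis_segments:
  fixes C :: "'a::euclidean_space set"
  assumes cvx: "convex C" and L: "0 < L"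
    and seg: "\<And>b. b \<in> Basis \<Longrightarrow> U b \<in> C \<and> U b + L *\<^sub>R b \<in> C"
  shows "ball ((1 / real DIM('a)) *\<^sub>R (\<Sum>b\<in>Basis. U b + (L / 2) *\<^sub>R b)) (L / (2 * real DIM('a))) \<subseteq> C"
proof
  define d where "d = real DIM('a)"
  define x where "x = (1 / d) *\<^sub>R (\<Sum>b\<in>Basis. U b + (L / 2) *\<^sub>R b)"
  have "0 < d"
    by (simp add: d_def)
  fix y assume "y \<in> ball ((1 / real DIM('a)) *\<^sub>R (\<Sum>b\<in>Basis. U b + (L / 2) *\<^sub>R b)) (L / (2 * real DIM('a)))"
  then have "norm (y - x) < L / (2 * d)"
    by (simp add: x_def d_def dist_norm norm_minus_commute)
  \<comment> \<open>\<open>y\<close> is the average of the points \<open>U b + s b *\<^sub>R b\<close>, which lie on the segments.\<close>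
  define s where "s b = L / 2 + d * ((y - x) \<bullet> b)" for b
  have on_segment: "U b + s b *\<^sub>R b \<in> C" if b: "b \<in> Basis" for b
  proof (rule convex_mem_shorter_step[OF cvx _ _ _ _, of _ L])
    have "\<bar>(y - x) \<bullet> b\<bar> < L / (2 * d)"
      using Basis_le_norm[OF b, of "y - x"] \<open>norm (y - x) < L / (2 * d)\<close> by linarith
    then have "\<bar>d * ((y - x) \<bullet> b)\<bar> < L / 2"
      using \<open>0 < d\<close> by (simp add: abs_mult field_simps)
    then show "0 \<le> s b" "s b \<le> L"
      by (auto simp: s_def abs_less_iff)
  qed (use seg b in auto)
  have "(\<Sum>b\<in>Basis. (1 / d) *\<^sub>R (U b + s b *\<^sub>R b)) \<in> C"
    by (rule convex_sum[OF finite_Basis cvx]) (auto simp: d_def on_segment)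
  also have "(\<Sum>b\<in>Basis. (1 / d) *\<^sub>R (U b + s b *\<^sub>R b))
      = (\<Sum>b\<in>Basis. (1 / d) *\<^sub>R (U b + (L / 2) *\<^sub>R b) + ((y - x) \<bullet> b) *\<^sub>R b)"
    using \<open>0 < d\<close> by (intro sum.cong) (simp_all add: s_def algebra_simps)
  also have "\<dots> = x + (y - x)"
    by (simp add: x_def scaleR_sum_right sum.distrib scaleR_add_right euclidean_representation)
  also have "\<dots> = y"
    by simp
  finally show "y \<in> C" .
qed

lemma cbox_subset_ball:
  fixes c :: "'a::euclidean_space"
  assumes "real DIM('a) * a < r"
  shows "cbox (c - a *\<^sub>R One) (c + a *\<^sub>R One) \<subseteq> ball c r"
proof
  fix x assume "x \<in> cbox (c - a *\<^sub>R One) (c + a *\<^sub>R One)"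
  then have "\<bar>(x - c) \<bullet> b\<bar> \<le> a" if "b \<in> Basis" for b
    using that by (auto simp: mem_box inner_diff_left inner_add_left abs_le_iff algebra_simps)
  then have "norm (x - c) \<le> real DIM('a) * a"
    using norm_le_l1[of "x - c"] sum_bounded_above[of Basis "\<lambda>b. \<bar>(x - c) \<bullet> b\<bar>" a] by simp
  then show "x \<in> ball c r"
    using assms by (simp add: dist_norm norm_minus_commute)
qed

lemma cube_cover_has_axis_segments:
  fixes S :: "nat \<Rightarrow> 'a::euclidean_space set" and c :: 'a and h :: real and k N M :: nat
  defines "Q \<equiv> cbox c (c + (h * real N) *\<^sub>R One)"
  assumes cvx: "\<And>i. i < k \<Longrightarrow> convex (S i)" and cov: "Q \<subseteq> (\<Union>i<k. S i)"
    and h: "0 < h" and kM: "k * M < N"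
  shows "\<exists>i<k. \<forall>b\<in>Basis. \<exists>u. u \<in> S i \<inter> Q \<and> u + (h * real M) *\<^sub>R b \<in> S i \<inter> Q"
proof -
  define G where "G = PiE (Basis :: 'a set) (\<lambda>_. {..<N})"
  define p where "p g = c + (\<Sum>b\<in>Basis. (h * real (g b)) *\<^sub>R b)" for g :: "'a \<Rightarrow> nat"
  have p_inner: "p g \<bullet> b = c \<bullet> b + h * real (g b)" if "b \<in> Basis" for g b
    using that by (simp add: p_def inner_add_left inner_sum_left inner_Basis if_distrib cong: if_cong)
  have p_in_Q: "p g \<in> Q" if "g \<in> G" for g
  proof -
    have "real (g b) \<le> real N" if "b \<in> Basis" for b
      using \<open>g \<in> G\<close> that by (auto simp: G_def PiE_def Pi_def less_imp_le)
    then show ?thesis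
      using h by (auto simp: Q_def mem_box p_inner inner_add_left inner_sum_left inner_Basis if_distrib cong: if_cong)
  qed
  have p_shift: "p g' = p g + (h * (real (g' b) - real (g b))) *\<^sub>R b"
    if "b \<in> Basis" and "\<forall>b'\<in>Basis - {b}. g b' = g' b'" for g g' b
  proof (rule euclidean_eqI)
    fix b' :: 'a assume "b' \<in> Basis"
    then show "p g' \<bullet> b' = (p g + (h * (real (g' b) - real (g b))) *\<^sub>R b) \<bullet> b'"
      using that by (cases "b' = b") (simp_all add: p_inner inner_add_left inner_Basis right_diff_distrib)
  qed
  have "PiE Basis (\<lambda>_. {..<N}) \<subseteq> (\<Union>i<k. {g. p g \<in> S i})"
    using cov p_in_Q unfolding G_def by blast
  from PiE_cover_has_long_lines[OF finite_Basis nonempty_Basis this kM]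
  obtain i where "i < k" and lines: "\<forall>b\<in>Basis. \<exists>g\<in>{g. p g \<in> S i} \<inter> G. \<exists>g'\<in>{g. p g \<in> S i} \<inter> G.
      (\<forall>b'\<in>Basis - {b}. g b' = g' b') \<and> g b + M \<le> g' b"
    unfolding G_def by blast
  have "\<exists>u. u \<in> S i \<inter> Q \<and> u + (h * real M) *\<^sub>R b \<in> S i \<inter> Q" if "b \<in> Basis" for b
  proof -
    obtain g g' where g: "g \<in> {g. p g \<in> S i} \<inter> G" and g': "g' \<in> {g. p g \<in> S i} \<inter> G"
      and agree: "\<forall>b'\<in>Basis - {b}. g b' = g' b'" and long: "g b + M \<le> g' b"
      using lines \<open>b \<in> Basis\<close> by blast
    have "convex (S i \<inter> Q)"
      using cvx[OF \<open>i < k\<close>] by (simp add: Q_def convex_Int)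
    moreover have "p g \<in> S i \<inter> Q" "p g + (h * (real (g' b) - real (g b))) *\<^sub>R b \<in> S i \<inter> Q"
      using g g' p_in_Q p_shift[OF \<open>b \<in> Basis\<close> agree, symmetric] by auto
    moreover have "0 \<le> h * real M" "h * real M \<le> h * (real (g' b) - real (g b))"
      using h long by (auto intro: mult_left_mono)
    ultimately have "p g + (h * real M) *\<^sub>R b \<in> S i \<inter> Q"
      by (rule convex_mem_shorter_step)
    then show ?thesis
      using \<open>p g \<in> S i \<inter> Q\<close> by blast
  qed
  then show ?thesis
    using \<open>i < k\<close> by blast
qed

lemma convex_cover_of_cube_contains_ball:
  fixes S :: "nat \<Rightarrow> 'a::euclidean_space set" and c :: 'a and h :: real and k N M :: nat
  defines "Q \<equiv> cbox c (c + (h * real N) *\<^sub>R One)"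
  assumes cvx: "\<And>i. i < k \<Longrightarrow> convex (S i)" and cov: "Q \<subseteq> (\<Union>i<k. S i)"
    and h: "0 < h" and M: "0 < M" and kM: "k * M < N"
  shows "\<exists>i<k. \<exists>x\<in>Q. ball x (h * real M / (2 * real DIM('a))) \<subseteq> S i"
proof -
  obtain i where "i < k" and "\<forall>b\<in>Basis. \<exists>u. u \<in> S i \<inter> Q \<and> u + (h * real M) *\<^sub>R b \<in> S i \<inter> Q"
    using cube_cover_has_axis_segments[OF cvx cov[unfolded Q_def] h kM] unfolding Q_def by blast
  then obtain U where "\<And>b. b \<in> Basis \<Longrightarrow> U b \<in> S i \<inter> Q \<and> U b + (h * real M) *\<^sub>R b \<in> S i \<inter> Q"
    by metis
  moreover have "convex (S i \<inter> Q)"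
    using cvx[OF \<open>i < k\<close>] by (simp add: Q_def convex_Int)
  moreover have "0 < h * real M"
    using h M by simp
  ultimately obtain x where "ball x (h * real M / (2 * real DIM('a))) \<subseteq> S i \<inter> Q"
    using convex_contains_ball_from_axis_segments by blast
  moreover have "x \<in> ball x (h * real M / (2 * real DIM('a)))"
    using \<open>0 < h * real M\<close> by simp
  ultimately show ?thesis
    using \<open>i < k\<close> by blast
qed

lemma convex_cover_of_ball_contains_smaller_ball:
  fixes S :: "nat \<Rightarrow> 'a::euclidean_space set"
  assumes cvx: "\<And>i. i < k \<Longrightarrow> convex (S i)" and cov: "ball c r \<subseteq> (\<Union>i<k. S i)"
    and \<rho>: "0 < \<rho>" "real k * real DIM('a) ^ 2 * \<rho> < r"
  shows "\<exists>i<k. \<exists>x\<in>ball c r. ball x \<rho> \<subseteq> S i"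
proof -
  define d where "d = real DIM('a)"
  have "0 \<le> real k * real DIM('a) ^ 2 * \<rho>"
    using \<rho>(1) by simp
  then have "0 < r"
    using \<rho>(2) by linarith
  then have "0 < k"
    using cov centre_in_ball by fastforce
  \<comment> \<open>A cube of half-side \<open>a < r / d\<close> fits in the ball; \<open>a > k d \<rho>\<close> leaves room for \<open>k M < N\<close>.\<close>
  define a where "a = (real k * d * \<rho> + r / d) / 2"
  have "1 \<le> d"
    by (simp add: d_def)
  then have "d * a < r" "real k * d * \<rho> < a"
    using \<rho>(2) by (simp_all add: a_def d_def field_simps power2_eq_square)
  moreover have "0 < real k * d * \<rho>"
    using \<rho>(1) \<open>0 < k\<close> \<open>1 \<le> d\<close> by simp
  ultimately have "0 < a" "d * \<rho> / a < 1 / real k"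
    using \<open>0 < k\<close> by (simp_all add: field_simps)
  then obtain q where "q \<in> \<rat>" "d * \<rho> / a < q" "q < 1 / real k"
    using Rats_dense_in_real by blast
  moreover have "0 < d * \<rho> / a"
    using \<open>0 < a\<close> \<rho>(1) \<open>1 \<le> d\<close> by simp
  then have "0 < q"
    using \<open>d * \<rho> / a < q\<close> by linarith
  ultimately obtain M N :: nat where "N \<noteq> 0" and q: "q = real M / real N"
    by (metis Rats_abs_nat_div_natE abs_of_pos)
  have "0 < M"
    using \<open>0 < q\<close> q by (metis divide_eq_0_iff gr0I less_irrefl of_nat_0)
  have "k * M < N"
    using \<open>q < 1 / real k\<close> \<open>0 < k\<close> \<open>N \<noteq> 0\<close> by (simp add: q field_simps flip: of_nat_mult)
  define h where "h = 2 * a / real N"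
  have "0 < h"
    using \<open>0 < a\<close> \<open>N \<noteq> 0\<close> by (simp add: h_def)
  define c' where "c' = c - a *\<^sub>R One"
  have "h * real N = 2 * a"
    using \<open>N \<noteq> 0\<close> by (simp add: h_def)
  then have cube: "cbox c' (c' + (h * real N) *\<^sub>R One) = cbox (c - a *\<^sub>R One) (c + a *\<^sub>R One)"
    by (simp add: c'_def scaleR_2 flip: scaleR_scaleR)
  also have "\<dots> \<subseteq> ball c r"
    using \<open>d * a < r\<close> by (intro cbox_subset_ball) (simp add: d_def)
  finally have cube_in_ball: "cbox c' (c' + (h * real N) *\<^sub>R One) \<subseteq> ball c r" .
  then have "cbox c' (c' + (h * real N) *\<^sub>R One) \<subseteq> (\<Union>i<k. S i)"
    using cov by (rule order_trans)
  from convex_cover_of_cube_contains_ball[OF cvx this \<open>0 < h\<close> \<open>0 < M\<close> \<open>k * M < N\<close>]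
  obtain i x where "i < k" "x \<in> cbox c' (c' + (h * real N) *\<^sub>R One)"
    and "ball x (h * real M / (2 * d)) \<subseteq> S i"
    unfolding d_def by blast
  moreover have "\<rho> \<le> h * real M / (2 * d)"
    using \<open>d * \<rho> / a < q\<close> \<open>0 < a\<close> \<open>1 \<le> d\<close> \<open>N \<noteq> 0\<close> by (simp add: q h_def field_simps)
  ultimately show ?thesis
    using cube_in_ball by (meson order_trans subset_ball subsetD)
qed

lemma ball_subset_of_arbitrarily_close_radii:
  fixes S :: "'i \<Rightarrow> 'a::metric_space set"
  assumes "compact K" and "finite I" and "0 < \<rho>\<^sub>0"
    and smaller: "\<And>\<rho>. 0 < \<rho> \<Longrightarrow> \<rho> < \<rho>\<^sub>0 \<Longrightarrow> \<exists>i\<in>I. \<exists>x\<in>K. ball x \<rho> \<subseteq> S i"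
  shows "\<exists>i\<in>I. \<exists>x. ball x \<rho>\<^sub>0 \<subseteq> S i"
proof (rule ccontr)
  assume none: "\<not> ?thesis"
  have close: "infdist x (- S i) < \<rho>\<^sub>0" if "i \<in> I" for i x
  proof -
    obtain y where "dist x y < \<rho>\<^sub>0" "y \<in> - S i"
      using none \<open>i \<in> I\<close> by (auto simp: subset_iff)
    then show ?thesis
      using infdist_le[of y "- S i" x] by simp
  qed
  \<comment> \<open>The largest inradius over the compact \<open>K\<close> and finitely many sets is attained, hence \<open>< \<rho>\<^sub>0\<close>.\<close>
  define D where "D = (\<Union>i\<in>I. (\<lambda>x. infdist x (- S i)) ` K)"
  have "compact D"
    unfolding D_def using \<open>finite I\<close> \<open>compact K\<close>
    by (intro compact_UN compact_continuous_image continuous_intros) auto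
  moreover have "D \<noteq> {}"
    using smaller[of "\<rho>\<^sub>0 / 2"] \<open>0 < \<rho>\<^sub>0\<close> unfolding D_def by auto
  ultimately obtain m where "m \<in> D" and m_max: "\<forall>t\<in>D. t \<le> m"
    using compact_attains_sup by blast
  then have "m < \<rho>\<^sub>0"
    using close by (auto simp: D_def)
  define \<rho> where "\<rho> = (max m 0 + \<rho>\<^sub>0) / 2"
  have "0 < \<rho>" "\<rho> < \<rho>\<^sub>0"
    using \<open>m < \<rho>\<^sub>0\<close> \<open>0 < \<rho>\<^sub>0\<close> by (auto simp: \<rho>_def)
  then obtain i x where "i \<in> I" "x \<in> K" and ball_x: "ball x \<rho> \<subseteq> S i"
    using smaller by blast
  have "- S i \<noteq> {}"
    using none \<open>i \<in> I\<close> by auto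
  then have "\<rho> \<le> infdist x (- S i)"
    unfolding infdist_notempty[OF \<open>- S i \<noteq> {}\<close>] using ball_x
    by (intro cINF_greatest) (auto simp: subset_iff not_less[symmetric])
  also have "\<dots> \<le> m"
    using m_max \<open>i \<in> I\<close> \<open>x \<in> K\<close> by (auto simp: D_def)
  finally show False
    using \<open>m < \<rho>\<^sub>0\<close> by (simp add: \<rho>_def)
qed

lemma real_DIM_power2_le_power_DIM:
  "real DIM('a::euclidean_space) ^ 2 \<le> real DIM('a) ^ DIM('a)"
proof (cases "DIM('a) = 1")
  case False
  then have "2 \<le> DIM('a)"
    using DIM_positive[where 'a = 'a] by linarith
  then show ?thesis
    by (intro power_increasing) auto
qed simp

theorem mainTheorem5:
  fixes S :: "nat \<Rightarrow> 'a::euclidean_space set" and k :: nat and r :: real and c :: 'a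
  assumes "k \<ge> 1" and "r > 0"
    and "\<And>i. i < k \<Longrightarrow> convex (S i)"
    and "ball c r \<subseteq> (\<Union>i<k. S i)"
  shows "\<exists>i<k. \<exists>x. ball x (r / (real k * real DIM('a) ^ DIM('a))) \<subseteq> S i"
proof -
  have "0 < real k * real DIM('a) ^ DIM('a)"
    using \<open>k \<ge> 1\<close> by simp
  then have "0 < r / (real k * real DIM('a) ^ DIM('a))"
    using \<open>r > 0\<close> by simp
  then have "\<exists>i\<in>{..<k}. \<exists>x. ball x (r / (real k * real DIM('a) ^ DIM('a))) \<subseteq> S i"
  proof (rule ball_subset_of_arbitrarily_close_radii[OF compact_cball finite_lessThan])
    fix \<rho> assume \<rho>: "0 < \<rho>" "\<rho> < r / (real k * real DIM('a) ^ DIM('a))"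
    have "real k * real DIM('a) ^ 2 * \<rho> \<le> real k * real DIM('a) ^ DIM('a) * \<rho>"
      using real_DIM_power2_le_power_DIM \<rho>(1) by (intro mult_right_mono mult_left_mono) auto
    also have "\<dots> < r"
      using \<rho>(2) \<open>0 < real k * real DIM('a) ^ DIM('a)\<close> by (simp add: pos_less_divide_eq mult.commute)
    finally obtain i x where "i < k" "x \<in> ball c r" "ball x \<rho> \<subseteq> S i"
      using convex_cover_of_ball_contains_smaller_ball[OF assms(3,4) \<rho>(1)] by blast
    then show "\<exists>i\<in>{..<k}. \<exists>x\<in>cball c r. ball x \<rho> \<subseteq> S i"
      by (meson ball_subset_cball lessThan_iff subsetD)
  qed
  then show ?thesis
    by blast
qed

end
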